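(* Let $P$ be a finite poset, let $P'$ be a barycentric subdivision of $P$, and let $a,b,c,d\in P'$. If $a<c$, $b<d$, $(b,c)\in\mathrm{Diag}(P')$ and $(a,b),(d,c)\in\mathrm{Inc}(P')$, then $b,c\in P$. If, moreover, $(a,c),(b,d)\in\mathrm{Diag}(P')$ and $a<d$, then $a,d\in P$.
   Context: For a poset $Q$, $x\prec y$ means $x<y$ with no $z$ satisfying $x<z<y$; $\mathrm{Diag}(Q)$ is the set of such covering pairs $(x,y)$, and $\mathrm{Inc}(Q)$ is the set of pairs of incomparable elements. A barycentric subdivision $P'$ of (the diagram of) $P$ is obtained by adding finitely many (possibly zero) new vertices on each edge $(x,y)$ of $\mathrm{Diag}(P)$, the added vertices on an edge forming a chain strictly between $x$ and $y$; $P'$ carries the induced order and contains $P$ as a subposet. Each added vertex has a unique upper cover and a unique lower cover in $P'$. *)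

theory Defs
  imports Main
begin

definition poset_on :: "'a set \<Rightarrow> ('a \<Rightarrow> 'a \<Rightarrow> bool) \<Rightarrow> bool" where
  "poset_on P le \<longleftrightarrow>
     (\<forall>x\<in>P. le x x) \<and>
     (\<forall>x\<in>P. \<forall>y\<in>P. le x y \<and> le y x \<longrightarrow> x = y) \<and>
     (\<forall>x\<in>P. \<forall>y\<in>P. \<forall>z\<in>P. le x y \<and> le y z \<longrightarrow> le x z)"

definition strict :: "('a \<Rightarrow> 'a \<Rightarrow> bool) \<Rightarrow> 'a \<Rightarrow> 'a \<Rightarrow> bool" where
  "strict le x y \<longleftrightarrow> le x y \<and> x \<noteq> y"

definition Diag :: "'a set \<Rightarrow> ('a \<Rightarrow> 'a \<Rightarrow> bool) \<Rightarrow> ('a \<times> 'a) set" where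
  "Diag P le = {(x, y). x \<in> P \<and> y \<in> P \<and> strict le x y \<and>
                        \<not> (\<exists>z\<in>P. strict le x z \<and> strict le z y)}"

definition Inc :: "'a set \<Rightarrow> ('a \<Rightarrow> 'a \<Rightarrow> bool) \<Rightarrow> ('a \<times> 'a) set" where
  "Inc P le = {(x, y). x \<in> P \<and> y \<in> P \<and> \<not> le x y \<and> \<not> le y x}"

definition sub_step ::
  "'a set \<Rightarrow> ('a \<Rightarrow> 'a \<Rightarrow> bool) \<Rightarrow> ('a \<times> 'a \<Rightarrow> 'a list) \<Rightarrow> 'a \<Rightarrow> 'a \<Rightarrow> bool" where
  "sub_step P le sub x y \<longleftrightarrow>
     (\<exists>(u, v)\<in>Diag P le. \<exists>i. Suc i < length (u # sub (u, v) @ [v]) \<and>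
        (u # sub (u, v) @ [v]) ! i = x \<and> (u # sub (u, v) @ [v]) ! Suc i = y)"

text \<open>P' (with order le') is a barycentric subdivision of P (with order le): finitely many
  new vertices are placed on each edge of Diag P, forming a chain; P' carries the order
  induced by the subdivided diagram (reflexive-transitive closure of its edges).\<close>
definition barycentric_subdivision ::
  "'a set \<Rightarrow> ('a \<Rightarrow> 'a \<Rightarrow> bool) \<Rightarrow> 'a set \<Rightarrow> ('a \<Rightarrow> 'a \<Rightarrow> bool) \<Rightarrow> bool" where
  "barycentric_subdivision P le P' le' \<longleftrightarrow>
     (\<exists>sub :: 'a \<times> 'a \<Rightarrow> 'a list.
        (\<forall>e\<in>Diag P le. distinct (sub e) \<and> set (sub e) \<inter> P = {}) \<and>
        (\<forall>e1\<in>Diag P le. \<forall>e2\<in>Diag P le. e1 \<noteq> e2 \<longrightarrow> set (sub e1) \<inter> set (sub e2) = {}) \<and>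
        P' = P \<union> (\<Union>e\<in>Diag P le. set (sub e)) \<and>
        (\<forall>x y. le' x y \<longleftrightarrow> x \<in> P' \<and> y \<in> P' \<and> (sub_step P le sub)\<^sup>*\<^sup>* x y))"

end

theory Submission
  imports Defs
begin

text \<open>A vertex added on an edge of the diagram of \<open>P\<close> has a unique upper cover \<open>s\<close> in \<open>P'\<close>, and
  everything strictly above it lies above \<open>s\<close>; dually for lower covers. If \<open>b\<close> were new, then
  \<open>b \<prec> c\<close> would make \<open>c\<close> that cover, so \<open>b < d\<close> would give \<open>c \<le> d\<close>, contradicting
  \<open>(d, c) \<in> Inc P'\<close>. The same argument, dualised or applied to the covers \<open>a \<prec> c\<close> and
  \<open>b \<prec> d\<close>, shows \<open>c, a, d \<in> P\<close>.\<close>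

definition adjacent_in :: "'a list \<Rightarrow> 'a \<Rightarrow> 'a \<Rightarrow> bool" where
  "adjacent_in xs x y \<longleftrightarrow> (\<exists>i. Suc i < length xs \<and> xs ! i = x \<and> xs ! Suc i = y)"

lemma adjacent_in_set: "adjacent_in xs x y \<Longrightarrow> x \<in> set xs \<and> y \<in> set xs"
  unfolding adjacent_in_def by (metis Suc_lessD nth_mem)

lemma adjacent_in_distinct_neq: "distinct xs \<Longrightarrow> adjacent_in xs x y \<Longrightarrow> x \<noteq> y"
  unfolding adjacent_in_def by (metis Suc_lessD n_not_Suc_n nth_eq_iff_index_eq)

lemma adjacent_in_distinct_right_unique:
  "distinct xs \<Longrightarrow> adjacent_in xs x y \<Longrightarrow> adjacent_in xs x y' \<Longrightarrow> y = y'"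
  unfolding adjacent_in_def by (metis Suc_lessD nth_eq_iff_index_eq)

lemma adjacent_in_distinct_left_unique:
  "distinct xs \<Longrightarrow> adjacent_in xs x y \<Longrightarrow> adjacent_in xs x' y \<Longrightarrow> x = x'"
  unfolding adjacent_in_def by (metis nat.inject nth_eq_iff_index_eq)

lemma adjacent_in_inner_successor:
  assumes "x \<in> set ys"
  shows "\<exists>y. adjacent_in (u # ys @ [v]) x y"
proof -
  obtain j where "j < length ys" "ys ! j = x" using assms by (meson in_set_conv_nth)
  then have "Suc (Suc j) < length (u # ys @ [v])" "(u # ys @ [v]) ! Suc j = x"
    by (simp_all add: nth_append)
  then show ?thesis unfolding adjacent_in_def by blast
qed

lemma adjacent_in_inner_predecessor:
  assumes "x \<in> set ys"
  shows "\<exists>w. adjacent_in (u # ys @ [v]) w x"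
proof -
  obtain j where "j < length ys" "ys ! j = x" using assms by (meson in_set_conv_nth)
  then have "Suc j < length (u # ys @ [v])" "(u # ys @ [v]) ! Suc j = x"
    by (simp_all add: nth_append)
  then show ?thesis unfolding adjacent_in_def by blast
qed

definition least_strict_upper_bound :: "'a set \<Rightarrow> ('a \<Rightarrow> 'a \<Rightarrow> bool) \<Rightarrow> 'a \<Rightarrow> 'a \<Rightarrow> bool" where
  "least_strict_upper_bound Q le x s \<longleftrightarrow> s \<in> Q \<and> strict le x s \<and> (\<forall>z. strict le x z \<longrightarrow> le s z)"

definition greatest_strict_lower_bound :: "'a set \<Rightarrow> ('a \<Rightarrow> 'a \<Rightarrow> bool) \<Rightarrow> 'a \<Rightarrow> 'a \<Rightarrow> bool" where
  "greatest_strict_lower_bound Q le x p \<longleftrightarrow> p \<in> Q \<and> strict le p x \<and> (\<forall>z. strict le z x \<longrightarrow> le z p)"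

lemma Diag_cover_le_if_least_strict_upper_bound:
  assumes cover: "(x, y) \<in> Diag Q le" and s: "least_strict_upper_bound Q le x s"
    and "strict le x w"
  shows "le y w"
proof -
  have "strict le x y" using cover by (simp add: Diag_def)
  then have "le s y" using s by (simp add: least_strict_upper_bound_def)
  moreover have "\<not> strict le s y"
    using cover s by (auto simp: Diag_def least_strict_upper_bound_def)
  ultimately have "s = y" by (simp add: strict_def)
  then show ?thesis using s \<open>strict le x w\<close> by (simp add: least_strict_upper_bound_def)
qed

lemma le_Diag_cover_if_greatest_strict_lower_bound:
  assumes cover: "(x, y) \<in> Diag Q le" and p: "greatest_strict_lower_bound Q le y p"
    and "strict le w y"
  shows "le w x"
proof -
  have "strict le x y" using cover by (simp add: Diag_def)
  then have "le x p" using p by (simp add: greatest_strict_lower_bound_def)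
  moreover have "\<not> strict le x p"
    using cover p by (auto simp: Diag_def greatest_strict_lower_bound_def)
  ultimately have "x = p" by (simp add: strict_def)
  then show ?thesis using p \<open>strict le w y\<close> by (simp add: greatest_strict_lower_bound_def)
qed

lemma least_strict_upper_bound_if_unique_successor:
  assumes le_iff: "\<And>y z. le y z \<longleftrightarrow> y \<in> Q \<and> z \<in> Q \<and> R\<^sup>*\<^sup>* y z"
    and "x \<in> Q" "s \<in> Q" "R x s" "s \<noteq> x" and succ_unique: "\<And>y. R x y \<Longrightarrow> y = s"
  shows "least_strict_upper_bound Q le x s"
proof -
  have "le s z" if "strict le x z" for z
  proof -
    have "R\<^sup>*\<^sup>* x z" "x \<noteq> z" "z \<in> Q" using that le_iff[of x z] by (simp_all add: strict_def)
    then obtain y where "R x y" "R\<^sup>*\<^sup>* y z" by (cases rule: converse_rtranclpE) simp_all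
    then show ?thesis using succ_unique le_iff[of s z] \<open>s \<in> Q\<close> \<open>z \<in> Q\<close> by simp
  qed
  moreover have "le x s" using le_iff[of x s] assms(2-4) by simp
  ultimately show ?thesis using assms(3,5) by (auto simp: least_strict_upper_bound_def strict_def)
qed

lemma greatest_strict_lower_bound_if_unique_predecessor:
  assumes le_iff: "\<And>y z. le y z \<longleftrightarrow> y \<in> Q \<and> z \<in> Q \<and> R\<^sup>*\<^sup>* y z"
    and "x \<in> Q" "p \<in> Q" "R p x" "p \<noteq> x" and pred_unique: "\<And>y. R y x \<Longrightarrow> y = p"
  shows "greatest_strict_lower_bound Q le x p"
proof -
  have "le z p" if "strict le z x" for z
  proof -
    have "R\<^sup>*\<^sup>* z x" "z \<noteq> x" "z \<in> Q" using that le_iff[of z x] by (simp_all add: strict_def)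
    then obtain y where "R y x" "R\<^sup>*\<^sup>* z y" by (cases rule: rtranclp.cases) simp_all
    then show ?thesis using pred_unique le_iff[of z p] \<open>p \<in> Q\<close> \<open>z \<in> Q\<close> by simp
  qed
  moreover have "le p x" using le_iff[of p x] assms(2-4) by simp
  ultimately show ?thesis using assms(3,5) by (auto simp: greatest_strict_lower_bound_def strict_def)
qed

locale edge_subdivision =
  fixes P :: "'a set" and le :: "'a \<Rightarrow> 'a \<Rightarrow> bool" and sub :: "'a \<times> 'a \<Rightarrow> 'a list"
  assumes distinct_sub: "e \<in> Diag P le \<Longrightarrow> distinct (sub e)"
    and sub_disjoint_base: "e \<in> Diag P le \<Longrightarrow> set (sub e) \<inter> P = {}"
    and sub_disjoint: "e1 \<in> Diag P le \<Longrightarrow> e2 \<in> Diag P le \<Longrightarrow> e1 \<noteq> e2 \<Longrightarrow>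
      set (sub e1) \<inter> set (sub e2) = {}"
begin

definition vertices :: "'a set" where
  "vertices = P \<union> (\<Union>e\<in>Diag P le. set (sub e))"

lemma distinct_edge_chain:
  assumes "(u, v) \<in> Diag P le"
  shows "distinct (u # sub (u, v) @ [v])"
proof -
  have "u \<in> P" "v \<in> P" "u \<noteq> v" using assms by (simp_all add: Diag_def strict_def)
  then show ?thesis using distinct_sub[OF assms] sub_disjoint_base[OF assms] by auto
qed

lemma edge_chain_unique:
  assumes "(u, v) \<in> Diag P le" "x \<in> set (sub (u, v))"
    and "(u', v') \<in> Diag P le" "x \<in> set (u' # sub (u', v') @ [v'])"
  shows "(u', v') = (u, v)"
proof -
  have "x \<notin> P" "u' \<in> P" "v' \<in> P"
    using assms sub_disjoint_base by (auto simp: Diag_def)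
  then have "x \<in> set (sub (u', v'))" using assms(4) by auto
  then show ?thesis using assms sub_disjoint by blast
qed

lemma sub_step_iff:
  "sub_step P le sub x y \<longleftrightarrow> (\<exists>(u, v)\<in>Diag P le. adjacent_in (u # sub (u, v) @ [v]) x y)"
  by (simp add: sub_step_def adjacent_in_def)

lemma sub_step_vertices: "sub_step P le sub x y \<Longrightarrow> x \<in> vertices \<and> y \<in> vertices"
  unfolding sub_step_iff vertices_def by (fastforce simp: Diag_def dest: adjacent_in_set)

lemma sub_step_at_new_vertex:
  assumes "(u, v) \<in> Diag P le" "x \<in> set (sub (u, v))" "x = y \<or> x = z"
  shows "sub_step P le sub y z \<longleftrightarrow> adjacent_in (u # sub (u, v) @ [v]) y z"
proof
  assume "sub_step P le sub y z"
  then obtain u' v' where e': "(u', v') \<in> Diag P le" "adjacent_in (u' # sub (u', v') @ [v']) y z"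
    unfolding sub_step_iff by blast
  then have "x \<in> set (u' # sub (u', v') @ [v'])" using assms(3) adjacent_in_set by metis
  then show "adjacent_in (u # sub (u, v) @ [v]) y z"
    using edge_chain_unique[OF assms(1,2) e'(1)] e'(2) by simp
qed (use assms(1) sub_step_iff in blast)

lemma new_vertex_unique_successor:
  assumes "(u, v) \<in> Diag P le" "x \<in> set (sub (u, v))"
  shows "\<exists>s. sub_step P le sub x s \<and> s \<noteq> x \<and> (\<forall>y. sub_step P le sub x y \<longrightarrow> y = s)"
  using adjacent_in_inner_successor[OF assms(2)] distinct_edge_chain[OF assms(1)]
    sub_step_at_new_vertex[OF assms]
  by (metis adjacent_in_distinct_neq adjacent_in_distinct_right_unique)

lemma new_vertex_unique_predecessor:
  assumes "(u, v) \<in> Diag P le" "x \<in> set (sub (u, v))"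
  shows "\<exists>p. sub_step P le sub p x \<and> p \<noteq> x \<and> (\<forall>y. sub_step P le sub y x \<longrightarrow> y = p)"
  using adjacent_in_inner_predecessor[OF assms(2)] distinct_edge_chain[OF assms(1)]
    sub_step_at_new_vertex[OF assms]
  by (metis adjacent_in_distinct_neq adjacent_in_distinct_left_unique)

end

lemma barycentric_subdivisionE:
  assumes "barycentric_subdivision P le P' le'"
  obtains sub where "edge_subdivision P le sub" "P' = edge_subdivision.vertices P le sub"
    "\<And>x y. le' x y \<longleftrightarrow> x \<in> P' \<and> y \<in> P' \<and> (sub_step P le sub)\<^sup>*\<^sup>* x y"
  using assms unfolding barycentric_subdivision_def
  by (metis edge_subdivision.intro edge_subdivision.vertices_def)

lemma new_vertex_least_strict_upper_bound:
  assumes "barycentric_subdivision P le P' le'" "x \<in> P'" "x \<notin> P"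
  shows "\<exists>s. least_strict_upper_bound P' le' x s"
proof -
  obtain sub where sd: "edge_subdivision P le sub" and P': "P' = edge_subdivision.vertices P le sub"
    and le': "\<And>x y. le' x y \<longleftrightarrow> x \<in> P' \<and> y \<in> P' \<and> (sub_step P le sub)\<^sup>*\<^sup>* x y"
    using assms(1) by (rule barycentric_subdivisionE) blast
  interpret edge_subdivision P le sub by (fact sd)
  obtain u v where "(u, v) \<in> Diag P le" "x \<in> set (sub (u, v))"
    using assms(2,3) P' vertices_def by auto
  then obtain s where "sub_step P le sub x s" "s \<noteq> x" "\<And>y. sub_step P le sub x y \<Longrightarrow> y = s"
    using new_vertex_unique_successor by blast
  then show ?thesis
    using least_strict_upper_bound_if_unique_successor[OF le'] sub_step_vertices P' by metis
qed

lemma new_vertex_greatest_strict_lower_bound: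
  assumes "barycentric_subdivision P le P' le'" "x \<in> P'" "x \<notin> P"
  shows "\<exists>p. greatest_strict_lower_bound P' le' x p"
proof -
  obtain sub where sd: "edge_subdivision P le sub" and P': "P' = edge_subdivision.vertices P le sub"
    and le': "\<And>x y. le' x y \<longleftrightarrow> x \<in> P' \<and> y \<in> P' \<and> (sub_step P le sub)\<^sup>*\<^sup>* x y"
    using assms(1) by (rule barycentric_subdivisionE) blast
  interpret edge_subdivision P le sub by (fact sd)
  obtain u v where "(u, v) \<in> Diag P le" "x \<in> set (sub (u, v))"
    using assms(2,3) P' vertices_def by auto
  then obtain p where "sub_step P le sub p x" "p \<noteq> x" "\<And>y. sub_step P le sub y x \<Longrightarrow> y = p"
    using new_vertex_unique_predecessor by blast
  then show ?thesis
    using greatest_strict_lower_bound_if_unique_predecessor[OF le'] sub_step_vertices P' by metis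
qed

lemma base_vertex_if_lower_end_of_cover:
  assumes "barycentric_subdivision P le P' le'" "(x, y) \<in> Diag P' le'"
    and "strict le' x w" "\<not> le' y w"
  shows "x \<in> P"
proof (rule ccontr)
  assume "x \<notin> P"
  moreover have "x \<in> P'" using assms(2) by (simp add: Diag_def)
  ultimately obtain s where "least_strict_upper_bound P' le' x s"
    using new_vertex_least_strict_upper_bound[OF assms(1)] by blast
  then have "le' y w" by (rule Diag_cover_le_if_least_strict_upper_bound[OF assms(2) _ assms(3)])
  with assms(4) show False by contradiction
qed

lemma base_vertex_if_upper_end_of_cover:
  assumes "barycentric_subdivision P le P' le'" "(x, y) \<in> Diag P' le'"
    and "strict le' w y" "\<not> le' w x"
  shows "y \<in> P"
proof (rule ccontr)
  assume "y \<notin> P"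
  moreover have "y \<in> P'" using assms(2) by (simp add: Diag_def)
  ultimately obtain p where "greatest_strict_lower_bound P' le' y p"
    using new_vertex_greatest_strict_lower_bound[OF assms(1)] by blast
  then have "le' w x" by (rule le_Diag_cover_if_greatest_strict_lower_bound[OF assms(2) _ assms(3)])
  with assms(4) show False by contradiction
qed

theorem lemma1:
  fixes P P' :: "'a set" and le le' :: "'a \<Rightarrow> 'a \<Rightarrow> bool" and a b c d :: 'a
  assumes "finite P" and "poset_on P le"
    and "barycentric_subdivision P le P' le'"
    and "a \<in> P'" and "b \<in> P'" and "c \<in> P'" and "d \<in> P'"
    and "strict le' a c" and "strict le' b d"
    and "(b, c) \<in> Diag P' le'"
    and "(a, b) \<in> Inc P' le'" and "(d, c) \<in> Inc P' le'"
  shows "b \<in> P \<and> c \<in> P \<and>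
         ((a, c) \<in> Diag P' le' \<and> (b, d) \<in> Diag P' le' \<and> strict le' a d \<longrightarrow> a \<in> P \<and> d \<in> P)"
proof -
  have ab: "\<not> le' a b" and cd: "\<not> le' c d" using assms(11,12) by (auto simp: Inc_def)
  have "b \<in> P" by (rule base_vertex_if_lower_end_of_cover[OF assms(3,10,9) cd])
  moreover have "c \<in> P" by (rule base_vertex_if_upper_end_of_cover[OF assms(3,10,8) ab])
  moreover have "a \<in> P" "d \<in> P"
    if "(a, c) \<in> Diag P' le'" "(b, d) \<in> Diag P' le'" "strict le' a d"
    using base_vertex_if_lower_end_of_cover[OF assms(3) that(1,3) cd]
      base_vertex_if_upper_end_of_cover[OF assms(3) that(2,3) ab] .
  ultimately show ?thesis by blast
qed

end
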